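(* Let $\mathcal Y$ be finite, $X\sim\mathbb P_X$ on $\mathcal X$, $r:\mathcal X\times\mathcal Y\to[0,\infty)$ bounded with $\|r\|_\infty=\sup_{x,y}r(x,y)$, and $g:\mathcal X\times[K]\to[0,1]$ with $\mathbb E_X[g(X,k)]>0$ for all $k$. Let $\mathcal C=\{(y_c,\mathcal I_c)\}_{c\in[C]}$ and $\alpha\in[0,1]$. Let $\mathrm{OPT}$ be the optimal value of the Primal LP$(r,g,\mathbb P_X,\mathcal C,\alpha)$. 1. For any $\hat r:\mathcal X\times\mathcal Y\to[0,\infty)$, let $\varepsilon_{\hat r}=\mathbb E_X\big[\sum_{y\in\mathcal Y}|\hat r(X,y)-r(X,y)|\big]$. If $\hat\pi$ is a minimizer of the Primal LP$(\hat r,g,\mathbb P_X,\mathcal C,\alpha)$, then $\mathbb E_X\big[\sum_{y}r(X,y)\hat\pi(X,y)\big]\le\mathrm{OPT}+\varepsilon_{\hat r}$. 2. For any $\hat g:\mathcal X\times[K]\to[0,1]$ with $\mathbb E_X[\hat g(X,k)]>0$ for all $k$, let $$\varepsilon_{\hat g}=\max_{k\in[K]}\mathbb E_X\Big[\Big|\frac{\hat g(X,k)}{\mathbb E_X[\hat g(X,k)]}-\frac{g(X,k)}{\mathbb E_X[g(X,k)]}\Big|\Big];$$ then $\varepsilon_{\hat g}\le\max_{k\in[K]}\frac{2\mathbb E_X[|\hat g(X,k)-g(X,k)|]}{\mathbb E_X[g(X,k)]}$. If $\hat\pi$ is a minimizer of the Primal LP$(r,\hat g,\mathbb P_X,\mathcal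 C,\alpha)$, then $$\mathbb E_X\Big[\sum_{y}r(X,y)\hat\pi(X,y)\Big]\le\mathrm{OPT}+2\|r\|_\infty\min\Big(1-\alpha,\frac{\varepsilon_{\hat g}}{\alpha+\varepsilon_{\hat g}}\Big)$$ (with the convention $0/0:=0$), and for all $c\in[C]$, $$\max_{k,k'\in\mathcal I_c}\Big|\mathbb E_X\Big[\Big(\frac{g(X,k)}{\mathbb E_X[g(X,k)]}-\frac{g(X,k')}{\mathbb E_X[g(X,k')]}\Big)\hat\pi(X,y_c)\Big]\Big|\le\min(1,\alpha+\varepsilon_{\hat g}).$$
   Context: Primal LP$(r,g,P,\mathcal C,\alpha)$ for a distribution $P$ on $\mathcal X$, $r:\mathcal X\times\mathcal Y\to[0,\infty)$, $g:\mathcal X\times[K]\to[0,1]$, constraints $\mathcal C=\{(y_c,\mathcal I_c)\}_{c\in[C]}$ ($y_c\in\mathcal Y$, $\mathcal I_c\subseteq[K]$) and $\alpha\in[0,1]$: minimize over $\pi:\mathcal X\times\mathcal Y\to[0,\infty)$ and $q\in\mathbb R^C$ the objective $\mathbb E_{X\sim P}[\sum_{y\in\mathcal Y}r(X,y)\pi(X,y)]$ subject to $\sum_{y}\pi(x,y)=1$ for all $x\in\mathcal X$ and $\big|\mathbb E_{X\sim P}\big[\frac{g(X,k)}{\mathbb E_{X\sim P}[g(X,k)]}\pi(X,y_c)\big]-q_c\big|\le\alpha/2$ for all $c\in[C]$, $k\in\mathcal I_c$. A feasible $\pi$ represents a randomized classifier with $\pi(x,y)=\Pr(h(X)=y\mid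 X=x)$. When $g(x,k)=\Pr(Z_k=1\mid X=x)$ and $P$ is the law of $X$, the normalizer equals $\Pr(Z_k=1)$ and the constraints are $\alpha$-group fairness. *)

theory Defs
  imports "HOL-Probability.Probability"
begin

text \<open>The distribution P is a measure M on the
  space of features; the label set is a finite type 'y; groups are indexed by
  k < K; constraints by c < C with label yc c and group set Ic c.\<close>

definition lp_objective ::
  "'x measure \<Rightarrow> ('x \<Rightarrow> 'y::finite \<Rightarrow> real) \<Rightarrow> ('x \<Rightarrow> 'y \<Rightarrow> real) \<Rightarrow> real" where
  "lp_objective M r \<pi> = (\<integral>x. (\<Sum>y\<in>UNIV. r x y * \<pi> x y) \<partial>M)"

definition lp_feasible ::
  "'x measure \<Rightarrow> ('x \<Rightarrow> nat \<Rightarrow> real) \<Rightarrow> nat \<Rightarrow> (nat \<Rightarrow> 'y::finite) \<Rightarrow> (nat \<Rightarrow> nat set)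
     \<Rightarrow> real \<Rightarrow> ('x \<Rightarrow> 'y \<Rightarrow> real) \<Rightarrow> bool" where
  "lp_feasible M g C yc Ic \<alpha> \<pi> \<longleftrightarrow>
     (\<forall>y. (\<lambda>x. \<pi> x y) \<in> borel_measurable M) \<and>
     (\<forall>x\<in>space M. \<forall>y. 0 \<le> \<pi> x y) \<and>
     (\<forall>x\<in>space M. (\<Sum>y\<in>UNIV. \<pi> x y) = 1) \<and>
     (\<exists>q::nat \<Rightarrow> real. \<forall>c<C. \<forall>k\<in>Ic c.
        \<bar>(\<integral>x. (g x k / (\<integral>x'. g x' k \<partial>M)) * \<pi> x (yc c) \<partial>M) - q c\<bar> \<le> \<alpha> / 2)"

definition lp_value ::
  "'x measure \<Rightarrow> ('x \<Rightarrow> 'y::finite \<Rightarrow> real) \<Rightarrow> ('x \<Rightarrow> nat \<Rightarrow> real) \<Rightarrow> nat \<Rightarrow> (nat \<Rightarrow> 'y)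
     \<Rightarrow> (nat \<Rightarrow> nat set) \<Rightarrow> real \<Rightarrow> real" where
  "lp_value M r g C yc Ic \<alpha> =
     Inf (lp_objective M r ` {\<pi>. lp_feasible M g C yc Ic \<alpha> \<pi>})"

definition lp_minimizer ::
  "'x measure \<Rightarrow> ('x \<Rightarrow> 'y::finite \<Rightarrow> real) \<Rightarrow> ('x \<Rightarrow> nat \<Rightarrow> real) \<Rightarrow> nat \<Rightarrow> (nat \<Rightarrow> 'y)
     \<Rightarrow> (nat \<Rightarrow> nat set) \<Rightarrow> real \<Rightarrow> ('x \<Rightarrow> 'y \<Rightarrow> real) \<Rightarrow> bool" where
  "lp_minimizer M r g C yc Ic \<alpha> \<pi> \<longleftrightarrow>
     lp_feasible M g C yc Ic \<alpha> \<pi> \<and>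
     (\<forall>\<pi>'. lp_feasible M g C yc Ic \<alpha> \<pi>' \<longrightarrow> lp_objective M r \<pi> \<le> lp_objective M r \<pi>')"

definition sup_norm :: "'x measure \<Rightarrow> ('x \<Rightarrow> 'y \<Rightarrow> real) \<Rightarrow> real" where
  "sup_norm M r = Sup {r x y | x y. x \<in> space M}"

definition eps_g ::
  "'x measure \<Rightarrow> nat \<Rightarrow> ('x \<Rightarrow> nat \<Rightarrow> real) \<Rightarrow> ('x \<Rightarrow> nat \<Rightarrow> real) \<Rightarrow> real" where
  "eps_g M K gh g = Max ((\<lambda>k. \<integral>x. \<bar>gh x k / (\<integral>x'. gh x' k \<partial>M) - g x k / (\<integral>x'. g x' k \<partial>M)\<bar> \<partial>M) ` {..<K})"

end

theory Submission
  imports Defs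
begin

text \<open>
  Part 1 is the plug-in argument: the minimizer \<open>\<pi>h\<close> for \<open>rh\<close> beats every feasible \<open>\<pi>\<close> on
  \<open>rh\<close>, and since \<open>\<bar>\<pi> - \<pi>h\<bar> \<le> 1\<close> pointwise, passing from \<open>rh\<close> to \<open>r\<close> costs at most
  \<open>\<integral>\<Sum>\<^sub>y \<bar>rh - r\<bar>\<close>.

  For part 2 write \<open>w\<^sub>k = g\<^sub>k / \<integral>g\<^sub>k\<close>, so that the constraints bound the group rates
  \<open>\<integral>w\<^sub>k p\<close> with \<open>p = \<pi>(\<cdot>, y\<^sub>c)\<close>. Since \<open>w\<^sub>k - wh\<^sub>k\<close> integrates to \<open>0\<close> and \<open>0 \<le> p \<le> 1\<close>,
  the rates for \<open>g\<close> and \<open>gh\<close> differ by at most \<open>\<epsilon>/2\<close>; so \<open>\<alpha>\<close>-fairness for one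
  weighting is \<open>(\<alpha> + \<epsilon>)\<close>-fairness for the other, which gives the fairness guarantee.
  Mixing a classifier with a constant one, \<open>t \<pi> + (1 - t) \<delta>\<^sub>y\<^sub>0\<close>, multiplies every rate gap
  by \<open>t\<close> and costs at most \<open>(1 - t) \<parallel>r\<parallel>\<^sub>\<infinity>\<close>. As every classifier is \<open>1\<close>-fair, the choices
  \<open>t = \<alpha>\<close> and \<open>t = \<alpha> / (\<alpha> + \<epsilon>)\<close> turn any \<open>g\<close>-feasible \<open>\<pi>\<close> into a \<open>gh\<close>-feasible one,
  which gives the bound on the objective.
\<close>

lemma integrable_mult_unit_interval:
  fixes f p :: "'a \<Rightarrow> real"
  assumes f: "integrable M f"
    and p: "p \<in> borel_measurable M" "\<forall>x\<in>space M. 0 \<le> p x \<and> p x \<le> 1"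
  shows "integrable M (\<lambda>x. f x * p x)"
  by (rule Bochner_Integration.integrable_bound[OF integrable_abs[OF f]])
     (use f p in \<open>auto simp: abs_mult intro!: mult_left_le\<close>)

lemma integral_mult_unit_interval_bounds:
  fixes w p :: "'a \<Rightarrow> real"
  assumes w: "integrable M w" "\<forall>x\<in>space M. 0 \<le> w x"
    and p: "p \<in> borel_measurable M" "\<forall>x\<in>space M. 0 \<le> p x \<and> p x \<le> 1"
  shows "0 \<le> (\<integral>x. w x * p x \<partial>M)" "(\<integral>x. w x * p x \<partial>M) \<le> integral\<^sup>L M w"
proof -
  show "0 \<le> (\<integral>x. w x * p x \<partial>M)"
    by (rule integral_nonneg_AE) (use w p in auto)
  show "(\<integral>x. w x * p x \<partial>M) \<le> integral\<^sup>L M w"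
    by (rule integral_mono[OF integrable_mult_unit_interval[OF w(1) p] w(1)])
       (use w p in \<open>auto intro: mult_left_le\<close>)
qed

text \<open>Pointwise, \<open>-f\<^sup>- \<le> f p \<le> f\<^sup>+\<close>; since \<open>\<integral>f = 0\<close>, both parts integrate to \<open>\<integral>\<bar>f\<bar> / 2\<close>.\<close>

lemma abs_integral_mult_unit_interval_le:
  fixes f p :: "'a \<Rightarrow> real"
  assumes f: "integrable M f" "integral\<^sup>L M f = 0"
    and p: "p \<in> borel_measurable M" "\<forall>x\<in>space M. 0 \<le> p x \<and> p x \<le> 1"
  shows "\<bar>\<integral>x. f x * p x \<partial>M\<bar> \<le> (\<integral>x. \<bar>f x\<bar> \<partial>M) / 2"
proof -
  have fp: "integrable M (\<lambda>x. f x * p x)"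
    by (rule integrable_mult_unit_interval[OF f(1) p])
  have "(\<integral>x. f x * p x \<partial>M) \<le> (\<integral>x. (\<bar>f x\<bar> + f x) / 2 \<partial>M)"
  proof (rule integral_mono[OF fp])
    show "integrable M (\<lambda>x. (\<bar>f x\<bar> + f x) / 2)" using f by auto
    fix x assume "x \<in> space M"
    then show "f x * p x \<le> (\<bar>f x\<bar> + f x) / 2"
      using p by (cases "0 \<le> f x") (auto simp: mult_left_le mult_nonneg_nonpos2)
  qed
  moreover have "(\<integral>x. (f x - \<bar>f x\<bar>) / 2 \<partial>M) \<le> (\<integral>x. f x * p x \<partial>M)"
  proof (rule integral_mono[OF _ fp])
    show "integrable M (\<lambda>x. (f x - \<bar>f x\<bar>) / 2)" using f by auto
    fix x assume x: "x \<in> space M"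
    show "(f x - \<bar>f x\<bar>) / 2 \<le> f x * p x"
    proof (cases "0 \<le> f x")
      case False
      then have "f x * 1 \<le> f x * p x" using p x by (intro mult_left_mono_neg) auto
      then show ?thesis using False by simp
    qed (use p x in simp)
  qed
  moreover have "(\<integral>x. (\<bar>f x\<bar> + f x) / 2 \<partial>M) = (\<integral>x. \<bar>f x\<bar> \<partial>M) / 2"
    and "(\<integral>x. (f x - \<bar>f x\<bar>) / 2 \<partial>M) = - (\<integral>x. \<bar>f x\<bar> \<partial>M) / 2"
    using f by simp_all
  ultimately show ?thesis by linarith
qed

lemma integral_abs_normalized_diff_le:
  fixes h g :: "'a \<Rightarrow> real"
  assumes h: "integrable M h" "\<forall>x\<in>space M. 0 \<le> h x" "0 < integral\<^sup>L M h"
    and g: "integrable M g" "0 < integral\<^sup>L M g"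
  shows "(\<integral>x. \<bar>h x / integral\<^sup>L M h - g x / integral\<^sup>L M g\<bar> \<partial>M)
           \<le> 2 * (\<integral>x. \<bar>h x - g x\<bar> \<partial>M) / integral\<^sup>L M g"
proof -
  define a b where "a = integral\<^sup>L M h" and "b = integral\<^sup>L M g"
  define D where "D = (\<integral>x. \<bar>h x - g x\<bar> \<partial>M)"
  have "(\<integral>x. \<bar>h x / a - g x / b\<bar> \<partial>M) \<le> (\<integral>x. h x * \<bar>1/a - 1/b\<bar> + \<bar>h x - g x\<bar> / b \<partial>M)"
  proof (rule integral_mono)
    show "integrable M (\<lambda>x. \<bar>h x / a - g x / b\<bar>)"
      and "integrable M (\<lambda>x. h x * \<bar>1/a - 1/b\<bar> + \<bar>h x - g x\<bar> / b)"
      using h g by auto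
    fix x assume "x \<in> space M"
    then have "h x * \<bar>1/a - 1/b\<bar> + \<bar>h x - g x\<bar> / b = \<bar>h x * (1/a - 1/b)\<bar> + \<bar>(h x - g x) / b\<bar>"
      using h g by (simp add: abs_mult b_def)
    moreover have "h x / a - g x / b = h x * (1/a - 1/b) + (h x - g x) / b"
      by (simp add: right_diff_distrib diff_divide_distrib)
    ultimately show "\<bar>h x / a - g x / b\<bar> \<le> h x * \<bar>1/a - 1/b\<bar> + \<bar>h x - g x\<bar> / b"
      by (metis abs_triangle_ineq)
  qed
  also have "\<dots> = a * \<bar>1/a - 1/b\<bar> + D / b"
    using h g unfolding a_def D_def by simp
  also have "a * \<bar>1/a - 1/b\<bar> = \<bar>b - a\<bar> / b"
    using h g by (simp add: a_def b_def abs_mult field_simps abs_div)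
  also have "\<bar>b - a\<bar> = \<bar>\<integral>x. g x - h x \<partial>M\<bar>"
    using h g unfolding a_def b_def by simp
  also have "\<dots> \<le> D"
    unfolding D_def by (rule order_trans[OF integral_abs_bound]) (simp add: abs_minus_commute)
  finally show ?thesis
    using g by (simp add: a_def b_def D_def divide_right_mono)
qed

definition randomized_classifier :: "'x measure \<Rightarrow> ('x \<Rightarrow> 'y::finite \<Rightarrow> real) \<Rightarrow> bool" where
  "randomized_classifier M \<pi> \<longleftrightarrow>
     (\<forall>y. (\<lambda>x. \<pi> x y) \<in> borel_measurable M) \<and>
     (\<forall>x\<in>space M. \<forall>y. 0 \<le> \<pi> x y) \<and>
     (\<forall>x\<in>space M. (\<Sum>y\<in>UNIV. \<pi> x y) = 1)"

lemma randomized_classifierD: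
  assumes "randomized_classifier M \<pi>"
  shows "(\<lambda>x. \<pi> x y) \<in> borel_measurable M" "\<forall>x\<in>space M. 0 \<le> \<pi> x y \<and> \<pi> x y \<le> 1"
proof -
  show "(\<lambda>x. \<pi> x y) \<in> borel_measurable M"
    using assms unfolding randomized_classifier_def by blast
  have "\<pi> x y \<le> (\<Sum>y\<in>UNIV. \<pi> x y)" if "x \<in> space M" for x
    by (rule member_le_sum) (use assms that in \<open>auto simp: randomized_classifier_def\<close>)
  then show "\<forall>x\<in>space M. 0 \<le> \<pi> x y \<and> \<pi> x y \<le> 1"
    using assms unfolding randomized_classifier_def by auto
qed

lemma integrable_sum_mult_classifier:
  fixes f \<pi> :: "'x \<Rightarrow> 'y::finite \<Rightarrow> real"
  assumes f: "\<forall>y. (\<lambda>x. f x y) \<in> borel_measurable M" "integrable M (\<lambda>x. \<Sum>y\<in>UNIV. \<bar>f x y\<bar>)"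
    and \<pi>: "randomized_classifier M \<pi>"
  shows "integrable M (\<lambda>x. \<Sum>y\<in>UNIV. f x y * \<pi> x y)"
proof (rule Bochner_Integration.integrable_bound[OF f(2)])
  show "(\<lambda>x. \<Sum>y\<in>UNIV. f x y * \<pi> x y) \<in> borel_measurable M"
    using f randomized_classifierD(1)[OF \<pi>] by (intro borel_measurable_sum borel_measurable_times) auto
  have "\<bar>\<Sum>y\<in>UNIV. f x y * \<pi> x y\<bar> \<le> (\<Sum>y\<in>UNIV. \<bar>f x y\<bar>)" if "x \<in> space M" for x
    using randomized_classifierD(2)[OF \<pi>] that
    by (intro order_trans[OF sum_abs] sum_mono) (auto simp: abs_mult intro!: mult_left_le)
  then show "AE x in M. norm (\<Sum>y\<in>UNIV. f x y * \<pi> x y) \<le> norm (\<Sum>y\<in>UNIV. \<bar>f x y\<bar>)"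
    by (auto intro!: AE_I2)
qed

lemma lp_objective_add:
  fixes r d \<pi> :: "'x \<Rightarrow> 'y::finite \<Rightarrow> real"
  assumes r: "\<forall>y. (\<lambda>x. r x y) \<in> borel_measurable M" "integrable M (\<lambda>x. \<Sum>y\<in>UNIV. \<bar>r x y\<bar>)"
    and d: "\<forall>y. (\<lambda>x. d x y) \<in> borel_measurable M" "integrable M (\<lambda>x. \<Sum>y\<in>UNIV. \<bar>d x y\<bar>)"
    and \<pi>: "randomized_classifier M \<pi>"
  shows "lp_objective M (\<lambda>x y. r x y + d x y) \<pi> = lp_objective M r \<pi> + lp_objective M d \<pi>"
  using integrable_sum_mult_classifier[OF r \<pi>] integrable_sum_mult_classifier[OF d \<pi>]
  by (simp add: lp_objective_def distrib_right sum.distrib)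

lemma lp_objective_nonneg:
  assumes "\<forall>x\<in>space M. \<forall>y. 0 \<le> r x y" "randomized_classifier M \<pi>"
  shows "0 \<le> lp_objective M r \<pi>"
  unfolding lp_objective_def
  by (rule integral_nonneg_AE) (use assms in \<open>auto simp: randomized_classifier_def intro!: sum_nonneg\<close>)

lemma lp_objective_perturbation:
  fixes r rh \<pi> \<pi>h :: "'x \<Rightarrow> 'y::finite \<Rightarrow> real"
  assumes r: "\<forall>y. (\<lambda>x. r x y) \<in> borel_measurable M" "integrable M (\<lambda>x. \<Sum>y\<in>UNIV. \<bar>r x y\<bar>)"
    and rh: "\<forall>y. (\<lambda>x. rh x y) \<in> borel_measurable M"
      "integrable M (\<lambda>x. \<Sum>y\<in>UNIV. \<bar>rh x y - r x y\<bar>)"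
    and \<pi>: "randomized_classifier M \<pi>" and \<pi>h: "randomized_classifier M \<pi>h"
    and le: "lp_objective M rh \<pi>h \<le> lp_objective M rh \<pi>"
  shows "lp_objective M r \<pi>h \<le> lp_objective M r \<pi> + (\<integral>x. (\<Sum>y\<in>UNIV. \<bar>rh x y - r x y\<bar>) \<partial>M)"
proof -
  define d where "d = (\<lambda>x y. rh x y - r x y)"
  have d: "\<forall>y. (\<lambda>x. d x y) \<in> borel_measurable M" "integrable M (\<lambda>x. \<Sum>y\<in>UNIV. \<bar>d x y\<bar>)"
    using r rh unfolding d_def by (auto intro: borel_measurable_diff)
  have split: "lp_objective M rh \<rho> = lp_objective M r \<rho> + lp_objective M d \<rho>"
    if "randomized_classifier M \<rho>" for \<rho>
    using lp_objective_add[OF r d that] by (simp add: d_def)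
  have "lp_objective M d \<pi> - lp_objective M d \<pi>h
          = (\<integral>x. (\<Sum>y\<in>UNIV. d x y * (\<pi> x y - \<pi>h x y)) \<partial>M)"
    using integrable_sum_mult_classifier[OF d \<pi>] integrable_sum_mult_classifier[OF d \<pi>h]
    by (simp add: lp_objective_def right_diff_distrib sum_subtractf)
  also have "\<dots> \<le> (\<integral>x. (\<Sum>y\<in>UNIV. \<bar>d x y\<bar>) \<partial>M)"
  proof (rule integral_mono)
    show "integrable M (\<lambda>x. \<Sum>y\<in>UNIV. d x y * (\<pi> x y - \<pi>h x y))"
      using integrable_sum_mult_classifier[OF d \<pi>] integrable_sum_mult_classifier[OF d \<pi>h]
      by (simp add: right_diff_distrib sum_subtractf)
    fix x assume x: "x \<in> space M"
    have "d x y * (\<pi> x y - \<pi>h x y) \<le> \<bar>d x y\<bar>" for y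
    proof -
      have "0 \<le> \<pi> x y" "\<pi> x y \<le> 1" "0 \<le> \<pi>h x y" "\<pi>h x y \<le> 1"
        using randomized_classifierD(2)[OF \<pi>, of y] randomized_classifierD(2)[OF \<pi>h, of y] x
        by auto
      then have "\<bar>\<pi> x y - \<pi>h x y\<bar> \<le> 1" by linarith
      then have "\<bar>d x y * (\<pi> x y - \<pi>h x y)\<bar> \<le> \<bar>d x y\<bar>"
        unfolding abs_mult by (rule mult_left_le) simp
      then show ?thesis by (rule order_trans[OF abs_ge_self])
    qed
    then show "(\<Sum>y\<in>UNIV. d x y * (\<pi> x y - \<pi>h x y)) \<le> (\<Sum>y\<in>UNIV. \<bar>d x y\<bar>)"
      by (intro sum_mono)
  qed (use d in simp)
  finally show ?thesis
    using le split[OF \<pi>] split[OF \<pi>h] unfolding d_def by linarith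
qed

definition group_weights :: "'x measure \<Rightarrow> nat \<Rightarrow> ('x \<Rightarrow> nat \<Rightarrow> real) \<Rightarrow> bool" where
  "group_weights M K g \<longleftrightarrow>
     (\<forall>k<K. (\<lambda>x. g x k) \<in> borel_measurable M) \<and>
     (\<forall>x\<in>space M. \<forall>k<K. 0 \<le> g x k \<and> g x k \<le> 1) \<and>
     (\<forall>k<K. 0 < (\<integral>x. g x k \<partial>M))"

definition group_rate :: "'x measure \<Rightarrow> ('x \<Rightarrow> nat \<Rightarrow> real) \<Rightarrow> nat \<Rightarrow> ('x \<Rightarrow> real) \<Rightarrow> real" where
  "group_rate M g k p = (\<integral>x. g x k / (\<integral>x'. g x' k \<partial>M) * p x \<partial>M)"

definition fair_within ::
  "'x measure \<Rightarrow> ('x \<Rightarrow> nat \<Rightarrow> real) \<Rightarrow> nat \<Rightarrow> (nat \<Rightarrow> 'y) \<Rightarrow> (nat \<Rightarrow> nat set)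
     \<Rightarrow> real \<Rightarrow> ('x \<Rightarrow> 'y \<Rightarrow> real) \<Rightarrow> bool" where
  "fair_within M g C yc Ic \<beta> \<pi> \<longleftrightarrow>
     (\<exists>q::nat \<Rightarrow> real. \<forall>c<C. \<forall>k\<in>Ic c. \<bar>group_rate M g k (\<lambda>x. \<pi> x (yc c)) - q c\<bar> \<le> \<beta> / 2)"

lemma lp_feasible_iff:
  "lp_feasible M g C yc Ic \<alpha> \<pi> \<longleftrightarrow> randomized_classifier M \<pi> \<and> fair_within M g C yc Ic \<alpha> \<pi>"
  unfolding lp_feasible_def randomized_classifier_def fair_within_def group_rate_def by blast

lemma lp_objective_le_lp_value_plus:
  assumes "lp_feasible M g C yc Ic \<alpha> \<pi>0"
    and "\<And>\<pi>. lp_feasible M g C yc Ic \<alpha> \<pi> \<Longrightarrow> lp_objective M r \<pi>h \<le> lp_objective M r \<pi> + D"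
  shows "lp_objective M r \<pi>h \<le> lp_value M r g C yc Ic \<alpha> + D"
proof -
  have "lp_objective M r \<pi>h - D \<le> lp_value M r g C yc Ic \<alpha>"
    unfolding lp_value_def using assms by (intro cInf_greatest) force+
  then show ?thesis by simp
qed

lemma lp_value_reward_perturbation:
  fixes r rh :: "'x \<Rightarrow> 'y::finite \<Rightarrow> real"
  assumes r: "\<forall>y. (\<lambda>x. r x y) \<in> borel_measurable M" "integrable M (\<lambda>x. \<Sum>y\<in>UNIV. \<bar>r x y\<bar>)"
    and rh: "\<forall>y. (\<lambda>x. rh x y) \<in> borel_measurable M"
      "integrable M (\<lambda>x. \<Sum>y\<in>UNIV. \<bar>rh x y - r x y\<bar>)"
    and \<pi>0: "lp_feasible M g C yc Ic \<alpha> \<pi>0"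
    and min: "lp_minimizer M rh g C yc Ic \<alpha> \<pi>h"
  shows "lp_objective M r \<pi>h \<le> lp_value M r g C yc Ic \<alpha> + (\<integral>x. (\<Sum>y\<in>UNIV. \<bar>rh x y - r x y\<bar>) \<partial>M)"
proof (rule lp_objective_le_lp_value_plus[OF \<pi>0])
  fix \<pi> assume "lp_feasible M g C yc Ic \<alpha> \<pi>"
  then show "lp_objective M r \<pi>h \<le> lp_objective M r \<pi> + (\<integral>x. (\<Sum>y\<in>UNIV. \<bar>rh x y - r x y\<bar>) \<partial>M)"
    using min by (intro lp_objective_perturbation[OF r rh]) (auto simp: lp_minimizer_def lp_feasible_iff)
qed

lemma sup_norm_upper:
  assumes "\<forall>x\<in>space M. \<forall>y. r x y \<le> B" "x \<in> space M"
  shows "r x y \<le> sup_norm M r"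
  unfolding sup_norm_def
  by (rule cSup_upper) (use assms in \<open>auto intro!: bdd_aboveI[where M=B]\<close>)

definition group_weight_dist :: "'x measure \<Rightarrow> ('x \<Rightarrow> nat \<Rightarrow> real) \<Rightarrow> ('x \<Rightarrow> nat \<Rightarrow> real) \<Rightarrow> nat \<Rightarrow> real" where
  "group_weight_dist M gh g k = (\<integral>x. \<bar>gh x k / (\<integral>x'. gh x' k \<partial>M) - g x k / (\<integral>x'. g x' k \<partial>M)\<bar> \<partial>M)"

lemma group_weight_dist_commute: "group_weight_dist M g gh k = group_weight_dist M gh g k"
  unfolding group_weight_dist_def by (simp add: abs_minus_commute)

lemma eps_g_ge: "k < K \<Longrightarrow> group_weight_dist M gh g k \<le> eps_g M K gh g"
  unfolding eps_g_def group_weight_dist_def by (intro Max_ge) auto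

lemma eps_g_nonneg:
  assumes "0 < K"
  shows "0 \<le> eps_g M K gh g"
proof -
  have "0 \<le> group_weight_dist M gh g 0"
    unfolding group_weight_dist_def by (rule integral_nonneg_AE) simp
  then show ?thesis using eps_g_ge[OF assms] by (rule order_trans)
qed

lemma fair_within_rate_gap:
  assumes "fair_within M g C yc Ic \<beta> \<pi>" "c < C" "k \<in> Ic c" "k' \<in> Ic c"
  shows "\<bar>group_rate M g k (\<lambda>x. \<pi> x (yc c)) - group_rate M g k' (\<lambda>x. \<pi> x (yc c))\<bar> \<le> \<beta>"
proof -
  obtain q where "\<forall>c<C. \<forall>k\<in>Ic c. \<bar>group_rate M g k (\<lambda>x. \<pi> x (yc c)) - q c\<bar> \<le> \<beta> / 2"
    using assms(1) unfolding fair_within_def by blast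
  then have "\<bar>group_rate M g k (\<lambda>x. \<pi> x (yc c)) - q c\<bar> \<le> \<beta> / 2"
    and "\<bar>group_rate M g k' (\<lambda>x. \<pi> x (yc c)) - q c\<bar> \<le> \<beta> / 2"
    using assms(2-4) by blast+
  then show ?thesis by linarith
qed

definition mix_with_label :: "real \<Rightarrow> ('x \<Rightarrow> 'y \<Rightarrow> real) \<Rightarrow> 'y \<Rightarrow> 'x \<Rightarrow> 'y \<Rightarrow> real" where
  "mix_with_label t \<pi> y0 x y = t * \<pi> x y + (1 - t) * (if y = y0 then 1 else 0)"

lemma randomized_classifier_mix:
  assumes "randomized_classifier M \<pi>" "0 \<le> t" "t \<le> 1"
  shows "randomized_classifier M (mix_with_label t \<pi> y0)"
  using assms unfolding randomized_classifier_def mix_with_label_def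
  by (auto simp: sum.distrib sum_distrib_left[symmetric]
      intro!: borel_measurable_add borel_measurable_times)

context prob_space
begin

lemma integrable_sum_abs_bounded:
  fixes r :: "'a \<Rightarrow> 'y::finite \<Rightarrow> real"
  assumes "\<forall>y. (\<lambda>x. r x y) \<in> borel_measurable M" "\<forall>x\<in>space M. \<forall>y. \<bar>r x y\<bar> \<le> B"
  shows "integrable M (\<lambda>x. \<Sum>y\<in>UNIV. \<bar>r x y\<bar>)"
proof (rule integrable_const_bound[where B="of_nat CARD('y) * B"])
  have "\<bar>\<Sum>y\<in>UNIV. \<bar>r x y\<bar>\<bar> \<le> of_nat CARD('y) * B" if "x \<in> space M" for x
    using sum_mono[of UNIV "\<lambda>y. \<bar>r x y\<bar>" "\<lambda>_. B"] assms(2) that by (simp add: sum_nonneg)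
  then show "AE x in M. norm (\<Sum>y\<in>UNIV. \<bar>r x y\<bar>) \<le> of_nat CARD('y) * B" by auto
qed (use assms(1) in \<open>auto intro!: borel_measurable_sum borel_measurable_abs\<close>)

lemma sup_norm_nonneg:
  assumes "\<forall>x\<in>space M. \<forall>y. 0 \<le> r x y \<and> r x y \<le> B"
  shows "0 \<le> sup_norm M r"
proof -
  obtain x where x: "x \<in> space M" using not_empty by blast
  then have "r x y \<le> sup_norm M r" for y
    using assms by (intro sup_norm_upper[where B=B]) auto
  then show ?thesis
    using assms x by (meson order_trans)
qed

lemma group_weight_normalized:
  assumes "group_weights M K g" "k < K"
  shows "integrable M (\<lambda>x. g x k)"
    and "integrable M (\<lambda>x. g x k / (\<integral>x'. g x' k \<partial>M))"
    and "\<forall>x\<in>space M. 0 \<le> g x k / (\<integral>x'. g x' k \<partial>M)"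
    and "(\<integral>x. g x k / (\<integral>x'. g x' k \<partial>M) \<partial>M) = 1"
proof -
  have g: "(\<lambda>x. g x k) \<in> borel_measurable M" "\<forall>x\<in>space M. 0 \<le> g x k \<and> g x k \<le> 1"
    "0 < (\<integral>x. g x k \<partial>M)"
    using assms unfolding group_weights_def by auto
  show "integrable M (\<lambda>x. g x k)"
    using g by (intro integrable_const_bound[where B=1]) auto
  then show "integrable M (\<lambda>x. g x k / (\<integral>x'. g x' k \<partial>M))" by simp
  show "\<forall>x\<in>space M. 0 \<le> g x k / (\<integral>x'. g x' k \<partial>M)" using g by simp
  show "(\<integral>x. g x k / (\<integral>x'. g x' k \<partial>M) \<partial>M) = 1" using g by simp
qed

lemma group_rate_bounds:
  assumes "group_weights M K g" "k < K"
    and "p \<in> borel_measurable M" "\<forall>x\<in>space M. 0 \<le> p x \<and> p x \<le> 1"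
  shows "0 \<le> group_rate M g k p" "group_rate M g k p \<le> 1"
  using integral_mult_unit_interval_bounds[OF group_weight_normalized(2,3)[OF assms(1,2)] assms(3,4)]
  unfolding group_rate_def group_weight_normalized(4)[OF assms(1,2)] by simp_all

lemma group_rate_diff_le:
  assumes g: "group_weights M K g" and gh: "group_weights M K gh" and k: "k < K"
    and p: "p \<in> borel_measurable M" "\<forall>x\<in>space M. 0 \<le> p x \<and> p x \<le> 1"
  shows "\<bar>group_rate M gh k p - group_rate M g k p\<bar>
           \<le> group_weight_dist M gh g k / 2"
proof -
  define w where "w = (\<lambda>x. gh x k / (\<integral>x'. gh x' k \<partial>M))"
  define v where "v = (\<lambda>x. g x k / (\<integral>x'. g x' k \<partial>M))"
  have w: "integrable M w" "integral\<^sup>L M w = 1" and v: "integrable M v" "integral\<^sup>L M v = 1"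
    using group_weight_normalized[OF g k] group_weight_normalized[OF gh k]
    unfolding w_def v_def by auto
  have "group_rate M gh k p - group_rate M g k p = (\<integral>x. w x * p x \<partial>M) - (\<integral>x. v x * p x \<partial>M)"
    unfolding group_rate_def w_def v_def ..
  also have "\<dots> = (\<integral>x. (w x - v x) * p x \<partial>M)"
    using integrable_mult_unit_interval[OF w(1) p] integrable_mult_unit_interval[OF v(1) p]
    by (simp add: left_diff_distrib)
  also have "\<bar>\<dots>\<bar> \<le> (\<integral>x. \<bar>w x - v x\<bar> \<partial>M) / 2"
    using w v by (intro abs_integral_mult_unit_interval_le p) auto
  finally show ?thesis unfolding w_def v_def group_weight_dist_def .
qed

lemma eps_g_le_Max:
  assumes g: "group_weights M K g" and gh: "group_weights M K gh" and K: "0 < K"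
  shows "eps_g M K gh g \<le> Max ((\<lambda>k. 2 * (\<integral>x. \<bar>gh x k - g x k\<bar> \<partial>M) / (\<integral>x. g x k \<partial>M)) ` {..<K})"
  unfolding eps_g_def
proof (subst Max_le_iff, goal_cases)
  case 3
  have "(\<integral>x. \<bar>gh x k / (\<integral>x'. gh x' k \<partial>M) - g x k / (\<integral>x'. g x' k \<partial>M)\<bar> \<partial>M)
          \<le> 2 * (\<integral>x. \<bar>gh x k - g x k\<bar> \<partial>M) / (\<integral>x. g x k \<partial>M)" if "k < K" for k
    using g gh that
    by (intro integral_abs_normalized_diff_le group_weight_normalized(1))
       (auto simp: group_weights_def)
  then show ?case
    by (auto intro: order_trans[OF _ Max_ge])
qed (use K in auto)

lemma fair_within_one:
  assumes "group_weights M K g" "\<forall>c<C. Ic c \<subseteq> {..<K}" "randomized_classifier M \<pi>"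
  shows "fair_within M g C yc Ic 1 \<pi>"
  unfolding fair_within_def
proof (intro exI[of _ "\<lambda>_. 1 / 2"] allI impI ballI)
  fix c k assume "c < C" "k \<in> Ic c"
  then have "0 \<le> group_rate M g k (\<lambda>x. \<pi> x (yc c))" "group_rate M g k (\<lambda>x. \<pi> x (yc c)) \<le> 1"
    using assms by (auto intro!: group_rate_bounds randomized_classifierD)
  then show "\<bar>group_rate M g k (\<lambda>x. \<pi> x (yc c)) - 1 / 2\<bar> \<le> 1 / 2" by linarith
qed

lemma fair_within_transfer:
  assumes g: "group_weights M K g" and gh: "group_weights M K gh"
    and Ic: "\<forall>c<C. Ic c \<subseteq> {..<K}" and \<pi>: "randomized_classifier M \<pi>"
    and eps: "\<forall>k<K. group_weight_dist M gh g k \<le> \<epsilon>"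
    and fair: "fair_within M g C yc Ic \<beta> \<pi>"
  shows "fair_within M gh C yc Ic (\<beta> + \<epsilon>) \<pi>"
proof -
  obtain q where q: "\<forall>c<C. \<forall>k\<in>Ic c. \<bar>group_rate M g k (\<lambda>x. \<pi> x (yc c)) - q c\<bar> \<le> \<beta> / 2"
    using fair unfolding fair_within_def by blast
  have "\<bar>group_rate M gh k (\<lambda>x. \<pi> x (yc c)) - q c\<bar> \<le> (\<beta> + \<epsilon>) / 2"
    if "c < C" "k \<in> Ic c" for c k
  proof -
    have k: "k < K" using Ic that by auto
    have "\<bar>group_rate M gh k (\<lambda>x. \<pi> x (yc c)) - group_rate M g k (\<lambda>x. \<pi> x (yc c))\<bar> \<le> \<epsilon> / 2"
      using group_rate_diff_le[OF g gh k randomized_classifierD[OF \<pi>, where y="yc c"]] eps k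
      by fastforce
    moreover have "\<bar>group_rate M g k (\<lambda>x. \<pi> x (yc c)) - q c\<bar> \<le> \<beta> / 2"
      using q that by blast
    ultimately show ?thesis unfolding add_divide_distrib by linarith
  qed
  then show ?thesis unfolding fair_within_def by blast
qed

lemma group_rate_mix:
  assumes "group_weights M K g" "k < K" "randomized_classifier M \<pi>"
  shows "group_rate M g k (\<lambda>x. mix_with_label t \<pi> y0 x y)
           = t * group_rate M g k (\<lambda>x. \<pi> x y) + (1 - t) * (if y = y0 then 1 else 0)"
proof -
  define w where "w = (\<lambda>x. g x k / (\<integral>x'. g x' k \<partial>M))"
  have w: "integrable M w" "integral\<^sup>L M w = 1"
    using group_weight_normalized[OF assms(1,2)] unfolding w_def by auto
  have "integrable M (\<lambda>x. w x * \<pi> x y)"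
    by (rule integrable_mult_unit_interval[OF w(1) randomized_classifierD[OF assms(3)]])
  then have "(\<integral>x. w x * mix_with_label t \<pi> y0 x y \<partial>M)
               = t * (\<integral>x. w x * \<pi> x y \<partial>M) + (1 - t) * (if y = y0 then 1 else 0)"
    using w by (simp add: mix_with_label_def distrib_left mult.left_commute)
  then show ?thesis unfolding group_rate_def w_def .
qed

lemma lp_feasible_mix:
  assumes g: "group_weights M K g" and Ic: "\<forall>c<C. Ic c \<subseteq> {..<K}"
    and \<pi>: "randomized_classifier M \<pi>" and fair: "fair_within M g C yc Ic \<beta> \<pi>"
    and t: "0 \<le> t" "t \<le> 1" "t * \<beta> \<le> \<alpha>"
  shows "lp_feasible M g C yc Ic \<alpha> (mix_with_label t \<pi> y0)"
proof -
  obtain q where q: "\<forall>c<C. \<forall>k\<in>Ic c. \<bar>group_rate M g k (\<lambda>x. \<pi> x (yc c)) - q c\<bar> \<le> \<beta> / 2"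
    using fair unfolding fair_within_def by blast
  define q' where "q' c = t * q c + (1 - t) * (if yc c = y0 then 1 else 0)" for c
  have "\<bar>group_rate M g k (\<lambda>x. mix_with_label t \<pi> y0 x (yc c)) - q' c\<bar> \<le> \<alpha> / 2"
    if "c < C" "k \<in> Ic c" for c k
  proof -
    have "k < K" using Ic that by auto
    then have "\<bar>group_rate M g k (\<lambda>x. mix_with_label t \<pi> y0 x (yc c)) - q' c\<bar>
                 = t * \<bar>group_rate M g k (\<lambda>x. \<pi> x (yc c)) - q c\<bar>"
      using t by (simp add: group_rate_mix[OF g _ \<pi>] q'_def abs_mult flip: right_diff_distrib)
    also have "\<dots> \<le> t * (\<beta> / 2)" using q that t by (intro mult_left_mono) auto
    finally show ?thesis using t by simp
  qed
  then have "fair_within M g C yc Ic \<alpha> (mix_with_label t \<pi> y0)"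
    unfolding fair_within_def by blast
  then show ?thesis
    using randomized_classifier_mix[OF \<pi> t(1,2)] by (simp add: lp_feasible_iff)
qed

lemma lp_feasible_exists:
  assumes "group_weights M K g" "\<forall>c<C. Ic c \<subseteq> {..<K}" "0 \<le> \<alpha>"
  shows "\<exists>\<pi> :: 'a \<Rightarrow> 'y::finite \<Rightarrow> real. lp_feasible M g C yc Ic \<alpha> \<pi>"
proof -
  fix y0 :: 'y
  define \<pi>0 :: "'a \<Rightarrow> 'y \<Rightarrow> real" where "\<pi>0 x y = (if y = y0 then 1 else 0)" for x y
  have "randomized_classifier M \<pi>0"
    unfolding randomized_classifier_def \<pi>0_def by simp
  then have "lp_feasible M g C yc Ic \<alpha> (mix_with_label 0 \<pi>0 y0)"
    using assms fair_within_one by (intro lp_feasible_mix[where \<beta>=1]) auto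
  then show ?thesis by blast
qed

lemma lp_objective_mix:
  fixes r :: "'a \<Rightarrow> 'y::finite \<Rightarrow> real"
  assumes r: "\<forall>y. (\<lambda>x. r x y) \<in> borel_measurable M" "\<forall>x\<in>space M. \<forall>y. \<bar>r x y\<bar> \<le> B"
    and \<pi>: "randomized_classifier M \<pi>"
  shows "lp_objective M r (mix_with_label t \<pi> y0) = t * lp_objective M r \<pi> + (1 - t) * (\<integral>x. r x y0 \<partial>M)"
proof -
  have "(\<Sum>y\<in>UNIV. r x y * mix_with_label t \<pi> y0 x y) = t * (\<Sum>y\<in>UNIV. r x y * \<pi> x y) + (1 - t) * r x y0"
    for x
    by (simp add: mix_with_label_def distrib_left sum.distrib sum_distrib_left mult.left_commute
        if_distrib[of "\<lambda>z. r x _ * z"] cong: if_cong)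
       (simp add: sum_distrib_left[symmetric])
  moreover have "integrable M (\<lambda>x. r x y0)"
    using r by (intro integrable_const_bound[where B=B]) auto
  ultimately show ?thesis
    using integrable_sum_mult_classifier[OF r(1) integrable_sum_abs_bounded[OF r] \<pi>]
    by (simp add: lp_objective_def)
qed

lemma lp_minimizer_objective_le_mix:
  fixes \<pi> :: "'a \<Rightarrow> 'y::finite \<Rightarrow> real"
  assumes r: "\<forall>y. (\<lambda>x. r x y) \<in> borel_measurable M" "\<forall>x\<in>space M. \<forall>y. 0 \<le> r x y \<and> r x y \<le> B"
    and g: "group_weights M K g" and Ic: "\<forall>c<C. Ic c \<subseteq> {..<K}"
    and min: "lp_minimizer M r g C yc Ic \<alpha> \<pi>h"
    and \<pi>: "randomized_classifier M \<pi>" and fair: "fair_within M g C yc Ic \<beta> \<pi>"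
    and t: "0 \<le> t" "t \<le> 1" "t * \<beta> \<le> \<alpha>"
  shows "lp_objective M r \<pi>h \<le> lp_objective M r \<pi> + (1 - t) * sup_norm M r"
proof -
  fix y0 :: 'y
  have r_abs: "\<forall>x\<in>space M. \<forall>y. \<bar>r x y\<bar> \<le> B" using r(2) by auto
  have "lp_objective M r \<pi>h \<le> lp_objective M r (mix_with_label t \<pi> y0)"
    using min lp_feasible_mix[OF g Ic \<pi> fair t] unfolding lp_minimizer_def by blast
  also have "\<dots> = t * lp_objective M r \<pi> + (1 - t) * (\<integral>x. r x y0 \<partial>M)"
    by (rule lp_objective_mix[OF r(1) r_abs \<pi>])
  also have "\<dots> \<le> lp_objective M r \<pi> + (1 - t) * sup_norm M r"
  proof (rule add_mono)
    show "t * lp_objective M r \<pi> \<le> lp_objective M r \<pi>"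
      using lp_objective_nonneg[OF _ \<pi>, of r] r t by (simp add: mult_left_le_one_le)
    have "integrable M (\<lambda>x. r x y0)"
      using r r_abs by (intro integrable_const_bound[where B=B]) auto
    then have "(\<integral>x. r x y0 \<partial>M) \<le> sup_norm M r"
      using r by (intro integral_le_const AE_I2 sup_norm_upper[where B=B]) auto
    then show "(1 - t) * (\<integral>x. r x y0 \<partial>M) \<le> (1 - t) * sup_norm M r"
      using t by (intro mult_left_mono) auto
  qed
  finally show ?thesis .
qed

lemma lp_minimizer_objective_le_min:
  assumes r: "\<forall>y. (\<lambda>x. r x y) \<in> borel_measurable M" "\<forall>x\<in>space M. \<forall>y. 0 \<le> r x y \<and> r x y \<le> B"
    and g: "group_weights M K g" and gh: "group_weights M K gh" and Ic: "\<forall>c<C. Ic c \<subseteq> {..<K}"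
    and eps: "\<forall>k<K. group_weight_dist M gh g k \<le> \<epsilon>"
      "0 \<le> \<epsilon>"
    and \<alpha>: "0 \<le> \<alpha>" "\<alpha> \<le> 1"
    and min: "lp_minimizer M r gh C yc Ic \<alpha> \<pi>h" and feas: "lp_feasible M g C yc Ic \<alpha> \<pi>"
  shows "lp_objective M r \<pi>h \<le> lp_objective M r \<pi> + sup_norm M r * min (1 - \<alpha>) (\<epsilon> / (\<alpha> + \<epsilon>))"
proof -
  have \<pi>: "randomized_classifier M \<pi>" and fair: "fair_within M g C yc Ic \<alpha> \<pi>"
    using feas by (simp_all add: lp_feasible_iff)
  have "lp_objective M r \<pi>h \<le> lp_objective M r \<pi> + (1 - \<alpha>) * sup_norm M r"
    using \<alpha> by (intro lp_minimizer_objective_le_mix[OF r gh Ic min \<pi> fair_within_one[OF gh Ic \<pi>]]) auto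
  moreover
  txt \<open>Scale \<open>\<pi>\<close>, which is \<open>(\<alpha> + \<epsilon>)\<close>-fair for \<open>gh\<close>, by \<open>t = \<alpha> / (\<alpha> + \<epsilon>)\<close> (and by
    \<open>t = 1\<close> when \<open>\<alpha> + \<epsilon> = 0\<close>).\<close>
  define t where "t = 1 - \<epsilon> / (\<alpha> + \<epsilon>)"
  have "0 \<le> t \<and> t \<le> 1 \<and> t * (\<alpha> + \<epsilon>) \<le> \<alpha>"
  proof (cases "\<alpha> + \<epsilon> = 0")
    case False
    then have "0 < \<alpha> + \<epsilon>" using \<alpha> eps(2) by linarith
    then show ?thesis using \<alpha> eps(2) by (simp add: t_def field_simps)
  qed (use \<alpha> eps(2) in \<open>simp add: t_def\<close>)
  then have "lp_objective M r \<pi>h \<le> lp_objective M r \<pi> + (1 - t) * sup_norm M r"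
    using lp_minimizer_objective_le_mix[OF r gh Ic min \<pi> fair_within_transfer[OF g gh Ic \<pi> eps(1) fair]]
    by blast
  ultimately show ?thesis by (simp add: t_def min_def mult.commute)
qed

lemma lp_value_group_perturbation:
  assumes r: "\<forall>y. (\<lambda>x. r x y) \<in> borel_measurable M" "\<forall>x\<in>space M. \<forall>y. 0 \<le> r x y \<and> r x y \<le> B"
    and g: "group_weights M K g" and gh: "group_weights M K gh" and Ic: "\<forall>c<C. Ic c \<subseteq> {..<K}"
    and eps: "\<forall>k<K. group_weight_dist M gh g k \<le> \<epsilon>"
      "0 \<le> \<epsilon>"
    and \<alpha>: "0 \<le> \<alpha>" "\<alpha> \<le> 1"
    and min: "lp_minimizer M r gh C yc Ic \<alpha> \<pi>h"
  shows "lp_objective M r \<pi>h \<le> lp_value M r g C yc Ic \<alpha> + 2 * sup_norm M r * min (1 - \<alpha>) (\<epsilon> / (\<alpha> + \<epsilon>))"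
proof -
  obtain \<pi>0 where \<pi>0: "lp_feasible M g C yc Ic \<alpha> \<pi>0"
    using lp_feasible_exists[OF g Ic \<alpha>(1)] by blast
  have "sup_norm M r * min (1 - \<alpha>) (\<epsilon> / (\<alpha> + \<epsilon>)) \<le> 2 * sup_norm M r * min (1 - \<alpha>) (\<epsilon> / (\<alpha> + \<epsilon>))"
    using sup_norm_nonneg[OF r(2)] \<alpha> eps(2) by (intro mult_right_mono) auto
  then show ?thesis
    using lp_minimizer_objective_le_min[OF r g gh Ic eps \<alpha> min]
    by (intro lp_objective_le_lp_value_plus[OF \<pi>0]) fastforce
qed

lemma lp_feasible_fairness_gap:
  assumes g: "group_weights M K g" and gh: "group_weights M K gh" and Ic: "\<forall>c<C. Ic c \<subseteq> {..<K}"
    and eps: "\<forall>k<K. group_weight_dist M gh g k \<le> \<epsilon>"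
    and feas: "lp_feasible M gh C yc Ic \<alpha> \<pi>h"
    and c: "c < C" "k \<in> Ic c" "k' \<in> Ic c"
  shows "\<bar>\<integral>x. (g x k / (\<integral>x'. g x' k \<partial>M) - g x k' / (\<integral>x'. g x' k' \<partial>M)) * \<pi>h x (yc c) \<partial>M\<bar>
           \<le> min 1 (\<alpha> + \<epsilon>)"
proof -
  have \<pi>h: "randomized_classifier M \<pi>h" and fair: "fair_within M gh C yc Ic \<alpha> \<pi>h"
    using feas by (simp_all add: lp_feasible_iff)
  have k: "k < K" "k' < K" using Ic c by auto
  define p where "p = (\<lambda>x. \<pi>h x (yc c))"
  have p: "p \<in> borel_measurable M" "\<forall>x\<in>space M. 0 \<le> p x \<and> p x \<le> 1"
    unfolding p_def by (rule randomized_classifierD[OF \<pi>h])+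
  have "(\<integral>x. (g x k / (\<integral>x'. g x' k \<partial>M) - g x k' / (\<integral>x'. g x' k' \<partial>M)) * p x \<partial>M)
          = group_rate M g k p - group_rate M g k' p"
    using integrable_mult_unit_interval[OF group_weight_normalized(2)[OF g k(1)] p]
      integrable_mult_unit_interval[OF group_weight_normalized(2)[OF g k(2)] p]
    by (simp add: group_rate_def left_diff_distrib)
  moreover have "\<bar>group_rate M g k p - group_rate M g k' p\<bar> \<le> 1"
    using group_rate_bounds[OF g k(1) p] group_rate_bounds[OF g k(2) p] by linarith
  moreover have "fair_within M g C yc Ic (\<alpha> + \<epsilon>) \<pi>h"
    using eps by (intro fair_within_transfer[OF gh g Ic \<pi>h _ fair]) (simp add: group_weight_dist_commute)
  then have "\<bar>group_rate M g k p - group_rate M g k' p\<bar> \<le> \<alpha> + \<epsilon>"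
    unfolding p_def using fair_within_rate_gap c by blast
  ultimately show ?thesis unfolding p_def by simp
qed

end

theorem theorem2:
  fixes M :: "'x measure"
    and r :: "'x \<Rightarrow> 'y::finite \<Rightarrow> real"
    and g :: "'x \<Rightarrow> nat \<Rightarrow> real"
    and K C :: nat
    and yc :: "nat \<Rightarrow> 'y"
    and Ic :: "nat \<Rightarrow> nat set"
    and \<alpha> :: real
  assumes P: "prob_space M"
    and K_pos: "0 < K"
    and r_meas: "\<forall>y. (\<lambda>x. r x y) \<in> borel_measurable M"
    and r_nonneg: "\<forall>x\<in>space M. \<forall>y. 0 \<le> r x y"
    and r_bdd: "\<exists>B. \<forall>x\<in>space M. \<forall>y. r x y \<le> B"
    and g_meas: "\<forall>k<K. (\<lambda>x. g x k) \<in> borel_measurable M"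
    and g_range: "\<forall>x\<in>space M. \<forall>k<K. 0 \<le> g x k \<and> g x k \<le> 1"
    and g_pos: "\<forall>k<K. 0 < (\<integral>x. g x k \<partial>M)"
    and Ic_sub: "\<forall>c<C. Ic c \<subseteq> {..<K}"
    and \<alpha>_range: "0 \<le> \<alpha>" "\<alpha> \<le> 1"
  shows
    "(\<forall>rh \<pi>h.
        (\<forall>y. (\<lambda>x. rh x y) \<in> borel_measurable M) \<and>
        (\<forall>x\<in>space M. \<forall>y. 0 \<le> rh x y) \<and>
        integrable M (\<lambda>x. \<Sum>y\<in>UNIV. \<bar>rh x y - r x y\<bar>) \<and>
        lp_minimizer M rh g C yc Ic \<alpha> \<pi>h
        \<longrightarrow> lp_objective M r \<pi>h \<le> lp_value M r g C yc Ic \<alpha>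
              + (\<integral>x. (\<Sum>y\<in>UNIV. \<bar>rh x y - r x y\<bar>) \<partial>M))
     \<and>
     (\<forall>gh.
        (\<forall>k<K. (\<lambda>x. gh x k) \<in> borel_measurable M) \<and>
        (\<forall>x\<in>space M. \<forall>k<K. 0 \<le> gh x k \<and> gh x k \<le> 1) \<and>
        (\<forall>k<K. 0 < (\<integral>x. gh x k \<partial>M))
        \<longrightarrow>
          eps_g M K gh g \<le> Max ((\<lambda>k. 2 * (\<integral>x. \<bar>gh x k - g x k\<bar> \<partial>M) / (\<integral>x. g x k \<partial>M)) ` {..<K})
          \<and>
          (\<forall>\<pi>h. lp_minimizer M r gh C yc Ic \<alpha> \<pi>h \<longrightarrow>
             lp_objective M r \<pi>h \<le> lp_value M r g C yc Ic \<alpha>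
               + 2 * sup_norm M r * min (1 - \<alpha>) (eps_g M K gh g / (\<alpha> + eps_g M K gh g))
             \<and>
             (\<forall>c<C. \<forall>k\<in>Ic c. \<forall>k'\<in>Ic c.
                \<bar>\<integral>x. (g x k / (\<integral>x'. g x' k \<partial>M) - g x k' / (\<integral>x'. g x' k' \<partial>M)) * \<pi>h x (yc c) \<partial>M\<bar>
                  \<le> min 1 (\<alpha> + eps_g M K gh g))))"
proof -
  interpret prob_space M by (rule P)
  obtain B where r_B: "\<forall>x\<in>space M. \<forall>y. 0 \<le> r x y \<and> r x y \<le> B"
    using r_bdd r_nonneg by blast
  have r_int: "integrable M (\<lambda>x. \<Sum>y\<in>UNIV. \<bar>r x y\<bar>)"
    using r_B by (intro integrable_sum_abs_bounded[OF r_meas]) auto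
  have g: "group_weights M K g"
    unfolding group_weights_def using g_meas g_range g_pos by blast
  obtain \<pi>0 where \<pi>0: "lp_feasible M g C yc Ic \<alpha> \<pi>0"
    using lp_feasible_exists[OF g Ic_sub \<alpha>_range(1)] by blast
  have eps: "\<forall>k<K. group_weight_dist M gh g k \<le> eps_g M K gh g" "0 \<le> eps_g M K gh g" for gh
    using eps_g_ge eps_g_nonneg[OF K_pos] by auto
  show ?thesis
  proof (intro conjI allI impI, goal_cases)
    case (1 rh \<pi>h)
    then show ?case by (intro lp_value_reward_perturbation[OF r_meas r_int _ _ \<pi>0]) auto
  next
    case (2 gh)
    then show ?case by (intro eps_g_le_Max[OF g _ K_pos]) (simp add: group_weights_def)
  next
    case (3 gh \<pi>h)
    then have gh: "group_weights M K gh" by (simp add: group_weights_def)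
    show ?case
      using 3 by (intro lp_value_group_perturbation[OF r_meas r_B g gh Ic_sub eps \<alpha>_range]) auto
  next
    case (4 gh \<pi>h c)
    then have gh: "group_weights M K gh" by (simp add: group_weights_def)
    show ?case
      using 4 by (intro ballI lp_feasible_fairness_gap[OF g gh Ic_sub eps(1)]) (auto simp: lp_minimizer_def)
  qed
qed

end
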